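(* Let $n\ge 2$, let $P=(P_1,\dots,P_t)$ be a partition of $\{1,\dots,n+1\}$, $n_i=|P_i|$, and ${\cal K}={\cal K}(P)$. Then: (ii) $Cox({\cal K})$ is isomorphic to $\prod_{i=1}^t Sym(1+n_i)$, so its order is $\prod_{i=1}^t (n_i+1)!$; (iii) $Cox({\cal K})=Aut({\cal K})$ if and only if the parts of $P$ have pairwise different sizes; (iv) $Cox({\cal K})$ acts transitively on the $n$-faces of ${\cal K}$.
   Context: For a partition $P=(P_1,\dots,P_t)$ of $\{1,\dots,n+1\}$, ${\cal K}(P)$ is the simplicial complex on the vertex set $\{1,\dots,n+1\}\cup\{p_1,\dots,p_t\}$ ($t$ new vertices) whose $n$-faces are the sets $\{y_1,\dots,y_{n+1}\}$ with, for each $i$, $y_i=i$ or $y_i=p_j$ where $i\in P_j$, subject to the $y_i$ being pairwise distinct; its faces are all nonempty subsets of these. $Aut({\cal K})$ is the group of permutations of the vertices of ${\cal K}$ mapping the set of faces onto itself. For $i\in\{1,\dots,n+1\}$ with $i\in P_j$, let $g_i$ be the permutation of the vertex set of ${\cal K}(P)$ exchanging $i$ and $p_j$ and fixing all other vertices (this is the "reflection" of the facet $\{1,\dots,n+1\}$ across its $(n-1)$-face $\{1,\dots,n+1\}\setminus\{i\}$, and is an automorphism of ${\cal K}(P)$). $Cox({\cal K})$ is the subgroup of $Aut({\cal K})$ generated by $g_1,\dots,g_{n+1}$. *)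

theory Defs
  imports "HOL-Algebra.Sym_Groups" "HOL-Algebra.Product_Groups" "HOL-Algebra.Generated_Groups"
    "HOL-Library.Disjoint_Sets" "HOL-Combinatorics.Transposition"
begin

text \<open>Vertices of K(P): original vertices Inl i (i in {1..n+1}) and one new vertex Inr B
  for each block B of the partition P (B plays the role of p_j).\<close>

definition vertices :: "nat \<Rightarrow> nat set set \<Rightarrow> (nat + nat set) set" where
  "vertices n P = Inl ` {1..n+1} \<union> Inr ` P"

definition blk :: "nat set set \<Rightarrow> nat \<Rightarrow> nat set" where
  "blk P i = (THE B. B \<in> P \<and> i \<in> B)"

definition facets :: "nat \<Rightarrow> nat set set \<Rightarrow> (nat + nat set) set set" where
  "facets n P = {y ` {1..n+1} | y. inj_on y {1..n+1} \<and>
      (\<forall>i\<in>{1..n+1}. y i = Inl i \<or> y i = Inr (blk P i))}"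

definition faces :: "nat \<Rightarrow> nat set set \<Rightarrow> (nat + nat set) set set" where
  "faces n P = {F. F \<noteq> {} \<and> (\<exists>G\<in>facets n P. F \<subseteq> G)}"

definition perm_group :: "'a set \<Rightarrow> ('a \<Rightarrow> 'a) monoid" where
  "perm_group V = \<lparr> carrier = {p. p permutes V}, mult = (\<circ>), one = id \<rparr>"

definition Aut :: "nat \<Rightarrow> nat set set \<Rightarrow> ((nat + nat set) \<Rightarrow> (nat + nat set)) set" where
  "Aut n P = {\<sigma>. \<sigma> permutes vertices n P \<and> (image \<sigma>) ` faces n P = faces n P}"

definition refl_gen :: "nat set set \<Rightarrow> nat \<Rightarrow> (nat + nat set) \<Rightarrow> (nat + nat set)" where
  "refl_gen P i = transpose (Inl i) (Inr (blk P i))"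

definition Cox :: "nat \<Rightarrow> nat set set \<Rightarrow> ((nat + nat set) \<Rightarrow> (nat + nat set)) set" where
  "Cox n P = generate (perm_group (vertices n P)) (refl_gen P ` {1..n+1})"

definition Cox_group :: "nat \<Rightarrow> nat set set \<Rightarrow> ((nat + nat set) \<Rightarrow> (nat + nat set)) monoid" where
  "Cox_group n P = (perm_group (vertices n P)) \<lparr> carrier := Cox n P \<rparr>"

end

(*
  K(P) is the join of the boundaries of the simplices on the augmented blocks
  S_B = P_B \<union> {p_B}, B \<in> P: a nonempty vertex set is a face iff it contains no
  whole S_B, and the facets are the complements of transversals of the S_B.
  Every reflection g_i is a transposition inside one S_B, and the transpositions
  of S_B centred at p_B generate Sym(S_B). Hence Cox(K) is the group of
  permutations preserving every S_B, which is \<Prod> Sym(S_B) = \<Prod> Sym(1 + n_B), and it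
  moves any transversal to any other one. An automorphism maps minimal non-faces,
  i.e. the S_B, to minimal non-faces of the same size; so all automorphisms fix
  every S_B when the sizes are distinct, while two blocks of equal size can be
  exchanged by an automorphism outside Cox(K).
*)

theory Submission
  imports Defs
begin

lemma perm_group_simps [simp]:
  "carrier (perm_group A) = {p. p permutes A}"
  "mult (perm_group A) = (\<circ>)"
  "one (perm_group A) = id"
  by (simp_all add: perm_group_def)

lemma group_perm_group: "group (perm_group A)"
  using permutes_inv permutes_inv_o(2)
  by (auto intro!: groupI simp: permutes_compose comp_assoc, blast)

lemma perm_group_inv: "p permutes A \<Longrightarrow> inv\<^bsub>perm_group A\<^esub> p = inv' p"
  by (rule group.inv_equality[OF group_perm_group]) (auto simp: permutes_inv permutes_inv_o)

lemma sym_group_eq_perm_group: "sym_group n = perm_group {1..n}"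
  by (simp add: sym_group_def perm_group_def)

lemma map_permutation_iso:
  assumes f: "bij_betw f A B"
  shows "map_permutation A f \<in> iso (perm_group A) (perm_group B)"
proof (rule isoI)
  have g: "bij_betw (inv_into A f) B A"
    using f by (rule bij_betw_inv_into)
  show "map_permutation A f \<in> hom (perm_group A) (perm_group B)"
    using f by (auto intro!: homI map_permutation_permutes map_permutation_compose'
        simp: bij_betw_imp_inj_on)
  show "bij_betw (map_permutation A f) (carrier (perm_group A)) (carrier (perm_group B))"
  proof (rule bij_betw_byWitness[where f' = "map_permutation B (inv_into A f)"])
    show "\<forall>p\<in>carrier (perm_group A). map_permutation B (inv_into A f) (map_permutation A f p) = p"
      using f by (auto intro: map_permutation_compose_inv bij_betw_inv_into_left)
    show "\<forall>q\<in>carrier (perm_group B). map_permutation A f (map_permutation B (inv_into A f) q) = q"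
      using f g by (auto intro: map_permutation_compose_inv bij_betw_inv_into_right)
  qed (use f g in \<open>auto intro: map_permutation_permutes\<close>)
qed

lemma perm_group_iso_sym_group:
  assumes "finite A"
  shows "perm_group A \<cong> sym_group (card A)"
proof -
  obtain h where "bij_betw h {1..card A} A"
    using ex_bij_betw_nat_finite_1[OF assms] by blast
  then have "bij_betw (inv_into {1..card A} h) A {1..card A}"
    by (rule bij_betw_inv_into)
  then show ?thesis
    unfolding sym_group_eq_perm_group by (rule is_isoI[OF map_permutation_iso])
qed

lemma permutes_image_family_eq_iff:
  assumes \<sigma>: "\<sigma> permutes A" and \<F>: "\<F> \<subseteq> Pow A"
  shows "image \<sigma> ` \<F> = \<F> \<longleftrightarrow> (\<forall>T\<subseteq>A. \<sigma> ` T \<in> \<F> \<longleftrightarrow> T \<in> \<F>)"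
proof
  assume eq: "image \<sigma> ` \<F> = \<F>"
  have "\<sigma> ` T \<in> \<F> \<longleftrightarrow> T \<in> \<F>" for T
  proof
    assume "\<sigma> ` T \<in> \<F>"
    then obtain T' where "T' \<in> \<F>" "\<sigma> ` T = \<sigma> ` T'"
      by (metis eq imageE)
    then show "T \<in> \<F>"
      by (simp add: inj_image_eq_iff[OF permutes_inj[OF \<sigma>]])
  qed (use eq in blast)
  then show "\<forall>T\<subseteq>A. \<sigma> ` T \<in> \<F> \<longleftrightarrow> T \<in> \<F>"
    by simp
next
  assume preserves: "\<forall>T\<subseteq>A. \<sigma> ` T \<in> \<F> \<longleftrightarrow> T \<in> \<F>"
  show "image \<sigma> ` \<F> = \<F>"
  proof
    show "image \<sigma> ` \<F> \<subseteq> \<F>"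
      using preserves \<F> by auto
    show "\<F> \<subseteq> image \<sigma> ` \<F>"
    proof
      fix T assume T: "T \<in> \<F>"
      have "inv' \<sigma> ` T \<subseteq> A"
        using T \<F> permutes_image[OF permutes_inv[OF \<sigma>]] by blast
      moreover have "\<sigma> ` inv' \<sigma> ` T = T"
        by (rule image_f_inv_f[OF permutes_surj[OF \<sigma>]])
      ultimately show "T \<in> image \<sigma> ` \<F>"
        using preserves T by (metis image_eqI)
    qed
  qed
qed

locale boundary_join =
  fixes I :: "'i set" and S :: "'i \<Rightarrow> 'a set"
  assumes finite_index: "finite I"
    and finite_block: "i \<in> I \<Longrightarrow> finite (S i)"
    and block_nonempty: "i \<in> I \<Longrightarrow> S i \<noteq> {}"
    and disjoint_blocks: "disjoint_family_on S I"
begin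

definition join_vertices :: "'a set" where
  "join_vertices = (\<Union>i\<in>I. S i)"

definition join_facets :: "'a set set" where
  "join_facets = {join_vertices - c ` I | c. c \<in> Pi I S}"

definition join_faces :: "'a set set" where
  "join_faces = {T. T \<noteq> {} \<and> T \<subseteq> join_vertices \<and> (\<forall>i\<in>I. \<not> S i \<subseteq> T)}"

definition join_automorphisms :: "('a \<Rightarrow> 'a) set" where
  "join_automorphisms = {\<sigma>. \<sigma> permutes join_vertices \<and> image \<sigma> ` join_faces = join_faces}"

definition block_perms :: "('a \<Rightarrow> 'a) set" where
  "block_perms = {\<sigma>. \<sigma> permutes join_vertices \<and> (\<forall>i\<in>I. \<sigma> ` S i = S i)}"

definition block_perm_group :: "('a \<Rightarrow> 'a) monoid" where
  "block_perm_group = (perm_group join_vertices)\<lparr>carrier := block_perms\<rparr>"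

lemma block_unique: "i \<in> I \<Longrightarrow> j \<in> I \<Longrightarrow> x \<in> S i \<Longrightarrow> x \<in> S j \<Longrightarrow> i = j"
  using disjoint_family_onD[OF disjoint_blocks] by blast

lemma block_eq_iff: "i \<in> I \<Longrightarrow> j \<in> I \<Longrightarrow> S i = S j \<longleftrightarrow> i = j"
  using block_unique block_nonempty by blast

lemma block_subset_vertices: "i \<in> I \<Longrightarrow> S i \<subseteq> join_vertices"
  by (auto simp: join_vertices_def)

lemma finite_join_vertices: "finite join_vertices"
  by (simp add: join_vertices_def finite_index finite_block)

lemma join_verticesE:
  assumes "x \<in> join_vertices"
  obtains i where "i \<in> I" "x \<in> S i"
  using assms by (auto simp: join_vertices_def)

lemma block_perms_subgroup: "subgroup block_perms (perm_group join_vertices)"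
proof (rule group.subgroupI[OF group_perm_group])
  show "block_perms \<subseteq> carrier (perm_group join_vertices)"
    by (auto simp: block_perms_def)
  have "id \<in> block_perms"
    by (simp add: block_perms_def permutes_id)
  then show "block_perms \<noteq> {}"
    by blast
  fix \<sigma> \<tau> assume \<sigma>: "\<sigma> \<in> block_perms" and \<tau>: "\<tau> \<in> block_perms"
  then show "\<sigma> \<otimes>\<^bsub>perm_group join_vertices\<^esub> \<tau> \<in> block_perms"
    by (simp add: block_perms_def permutes_compose flip: image_image)
  have "inv' \<sigma> ` S i = S i" if "i \<in> I" for i
    using \<sigma> that image_inv_f_f[OF permutes_inj, of \<sigma> join_vertices "S i"]
    by (auto simp: block_perms_def)
  then show "inv\<^bsub>perm_group join_vertices\<^esub> \<sigma> \<in> block_perms"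
    using \<sigma> by (simp add: block_perms_def perm_group_inv permutes_inv)
qed

lemma transpose_in_block_perms:
  assumes "i \<in> I" "a \<in> S i" "b \<in> S i"
  shows "transpose a b \<in> block_perms"
proof -
  have "transpose a b ` S j = S j" if "j \<in> I" for j
    using assms that block_unique by (intro transpose_image_eq) blast
  then show ?thesis
    using assms block_subset_vertices by (auto simp: block_perms_def intro!: permutes_swap_id)
qed

lemma block_perms_subset_subgroup:
  assumes K: "subgroup K (perm_group join_vertices)"
    and transpositions: "\<And>i a b. i \<in> I \<Longrightarrow> a \<in> S i \<Longrightarrow> b \<in> S i \<Longrightarrow> transpose a b \<in> K"
  shows "block_perms \<subseteq> K"
proof -
  have "\<sigma> \<in> K" if "X \<subseteq> join_vertices" "\<sigma> \<in> block_perms" "\<sigma> permutes X" for X \<sigma>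
    using finite_subset[OF that(1) finite_join_vertices] that
  proof (induction X arbitrary: \<sigma> rule: finite_induct)
    case empty
    then show ?case
      using subgroup.one_closed[OF K] by (simp add: id_def)
  next
    case (insert a X)
    obtain i where i: "i \<in> I" "a \<in> S i"
      using insert.prems(1) by (blast elim: join_verticesE)
    have "\<sigma> a \<in> S i"
      using insert.prems(2) i by (auto simp: block_perms_def)
    then have t: "transpose a (\<sigma> a) \<in> block_perms" "transpose a (\<sigma> a) \<in> K"
      using i transpose_in_block_perms transpositions by auto
    have "transpose a (\<sigma> a) \<circ> \<sigma> \<in> block_perms"
      using subgroup.m_closed[OF block_perms_subgroup t(1) insert.prems(2)] by simp
    moreover have "transpose a (\<sigma> a) \<circ> \<sigma> permutes X"
      by (rule permutes_insert_lemma[OF insert.prems(3)])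
    ultimately have "transpose a (\<sigma> a) \<circ> \<sigma> \<in> K"
      using insert.IH insert.prems(1) by blast
    then have "transpose a (\<sigma> a) \<circ> (transpose a (\<sigma> a) \<circ> \<sigma>) \<in> K"
      using subgroup.m_closed[OF K t(2)] by simp
    then show ?case
      by (simp flip: comp_assoc)
  qed
  then show ?thesis
    by (auto simp: block_perms_def)
qed

lemma block_perms_eq_generate_stars:
  assumes centre: "\<And>i. i \<in> I \<Longrightarrow> c i \<in> S i"
  shows "block_perms = generate (perm_group join_vertices)
           {transpose (c i) x | i x. i \<in> I \<and> x \<in> S i - {c i}}" (is "_ = generate _ ?stars")
proof (rule group.generateI[OF group_perm_group block_perms_subgroup])
  show "?stars \<subseteq> block_perms"
    using centre transpose_in_block_perms by blast
  fix K assume K: "subgroup K (perm_group join_vertices)" and "?stars \<subseteq> K"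
  then have star: "transpose (c i) x \<in> K" if "i \<in> I" "x \<in> S i" for i x
    using that subgroup.one_closed[OF K] by (cases "x = c i") auto
  show "block_perms \<subseteq> K"
  proof (rule block_perms_subset_subgroup[OF K])
    fix i a b assume i: "i \<in> I" and ab: "a \<in> S i" "b \<in> S i"
    show "transpose a b \<in> K"
    proof (cases "a = b \<or> b = c i")
      case True
      then show ?thesis
        using star[OF i ab(1)] subgroup.one_closed[OF K] by (auto simp: transpose_commute)
    next
      case False
      \<comment> \<open>conjugate the star transposition at b by the one at a\<close>
      then have "transpose a b = transpose a (c i) \<circ> transpose (c i) b \<circ> transpose a (c i)"
        by (intro transpose_comp_triple[symmetric]) auto
      then show ?thesis
        using star[OF i] ab subgroup.m_closed[OF K] by (simp add: transpose_commute)
    qed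
  qed
qed

lemma block_perm_extending:
  assumes \<rho>: "\<And>i. i \<in> I \<Longrightarrow> \<rho> i permutes S i"
  obtains \<sigma> where "\<sigma> \<in> block_perms" and "\<And>i x. i \<in> I \<Longrightarrow> x \<in> S i \<Longrightarrow> \<sigma> x = \<rho> i x"
proof
  define \<sigma> where "\<sigma> x = (if x \<in> join_vertices then \<rho> (SOME i. i \<in> I \<and> x \<in> S i) x else x)" for x
  show on_block: "\<sigma> x = \<rho> i x" if "i \<in> I" "x \<in> S i" for i x
  proof -
    have "(SOME i. i \<in> I \<and> x \<in> S i) = i"
      using that block_unique by blast
    then show ?thesis
      using that block_subset_vertices by (auto simp: \<sigma>_def)
  qed
  have image_block: "\<sigma> ` S i = S i" if "i \<in> I" for i
    using on_block[OF that] permutes_image[OF \<rho>[OF that]] by (simp cong: image_cong)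
  have "inj_on \<sigma> join_vertices"
  proof (rule inj_onI)
    fix x y assume "x \<in> join_vertices" "y \<in> join_vertices" and eq: "\<sigma> x = \<sigma> y"
    then obtain i j where i: "i \<in> I" "x \<in> S i" and j: "j \<in> I" "y \<in> S j"
      by (blast elim: join_verticesE)
    have "\<sigma> x \<in> S i" "\<sigma> y \<in> S j"
      using image_block i j by blast+
    then have "i = j"
      using block_unique i j eq by metis
    then show "x = y"
      using eq on_block i j permutes_inj[OF \<rho>[OF i(1)]] by (metis injD)
  qed
  moreover have "\<sigma> ` join_vertices = join_vertices"
    using image_block by (simp add: join_vertices_def image_UN)
  ultimately have "\<sigma> permutes join_vertices"
    by (intro bij_imp_permutes) (auto simp: bij_betw_def \<sigma>_def)
  then show "\<sigma> \<in> block_perms"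
    using image_block by (simp add: block_perms_def)
qed

lemma restrict_id_block_permutes:
  "\<sigma> \<in> block_perms \<Longrightarrow> i \<in> I \<Longrightarrow> restrict_id \<sigma> (S i) permutes S i"
  by (intro permutes_restrict_id)
     (auto simp: block_perms_def bij_betw_def intro: inj_on_subset[OF permutes_inj_on])

definition restrict_blocks :: "('a \<Rightarrow> 'a) \<Rightarrow> 'i \<Rightarrow> 'a \<Rightarrow> 'a" where
  "restrict_blocks \<sigma> = (\<lambda>i\<in>I. restrict_id \<sigma> (S i))"

abbreviation block_product_group :: "('i \<Rightarrow> 'a \<Rightarrow> 'a) monoid" where
  "block_product_group \<equiv> product_group I (\<lambda>i. perm_group (S i))"

lemma restrict_blocks_in_carrier:
  "\<sigma> \<in> block_perms \<Longrightarrow> restrict_blocks \<sigma> \<in> carrier block_product_group"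
  using restrict_id_block_permutes by (auto simp: restrict_blocks_def cong del: restrict_id_cong)

lemma inj_on_restrict_blocks: "inj_on restrict_blocks block_perms"
proof (rule inj_onI)
  fix \<sigma> \<tau> assume \<sigma>: "\<sigma> \<in> block_perms" and \<tau>: "\<tau> \<in> block_perms"
    and eq: "restrict_blocks \<sigma> = restrict_blocks \<tau>"
  show "\<sigma> = \<tau>"
  proof
    fix x
    show "\<sigma> x = \<tau> x"
    proof (cases "x \<in> join_vertices")
      case True
      then obtain i where i: "i \<in> I" "x \<in> S i"
        by (blast elim: join_verticesE)
      have "\<sigma> x = restrict_blocks \<sigma> i x"
        using i by (simp add: restrict_blocks_def)
      also have "\<dots> = restrict_blocks \<tau> i x"
        by (simp only: eq)
      also have "\<dots> = \<tau> x"
        using i by (simp add: restrict_blocks_def)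
      finally show ?thesis .
    next
      case False
      have "\<sigma> permutes join_vertices" "\<tau> permutes join_vertices"
        using \<sigma> \<tau> by (simp_all add: block_perms_def)
      then show ?thesis
        using False by (simp add: permutes_not_in)
    qed
  qed
qed

lemma carrier_subset_restrict_blocks_image:
  "carrier block_product_group \<subseteq> restrict_blocks ` block_perms"
proof
  fix \<rho> assume "\<rho> \<in> carrier block_product_group"
  then have \<rho>: "\<rho> \<in> (\<Pi>\<^sub>E i\<in>I. {p. p permutes S i})"
    by simp
  obtain \<sigma> where \<sigma>: "\<sigma> \<in> block_perms" and on_block: "\<And>i x. i \<in> I \<Longrightarrow> x \<in> S i \<Longrightarrow> \<sigma> x = \<rho> i x"
    using block_perm_extending[of \<rho>] \<rho> by blast
  have "restrict_blocks \<sigma> i = \<rho> i" for i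
  proof (cases "i \<in> I")
    case True
    then have perm: "\<rho> i permutes S i"
      using \<rho> by auto
    show ?thesis
    proof
      fix x
      show "restrict_blocks \<sigma> i x = \<rho> i x"
        using True on_block[OF True] permutes_not_in[OF perm]
        by (cases "x \<in> S i") (simp_all add: restrict_blocks_def)
    qed
  next
    case False
    then show ?thesis
      using PiE_arb[OF \<rho> False] by (simp add: restrict_blocks_def)
  qed
  then show "\<rho> \<in> restrict_blocks ` block_perms"
    using \<sigma> by (metis ext image_eqI)
qed

lemma restrict_blocks_iso: "restrict_blocks \<in> iso block_perm_group block_product_group"
proof (rule isoI)
  have restrict_comp: "restrict_id (\<sigma> \<circ> \<tau>) (S i) = restrict_id \<sigma> (S i) \<circ> restrict_id \<tau> (S i)"
    if "\<tau> \<in> block_perms" "i \<in> I" for \<sigma> \<tau> i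
    using that by (auto simp: block_perms_def restrict_id_def fun_eq_iff)
  show "restrict_blocks \<in> hom block_perm_group block_product_group"
    by (rule homI)
       (auto simp: block_perm_group_def restrict_blocks_def restrict_id_block_permutes restrict_comp
         intro!: restrict_ext cong del: restrict_id_cong)
  show "bij_betw restrict_blocks (carrier block_perm_group) (carrier block_product_group)"
    using inj_on_restrict_blocks carrier_subset_restrict_blocks_image restrict_blocks_in_carrier
    by (auto simp: bij_betw_def block_perm_group_def)
qed

lemma block_perm_group_iso_sym_groups:
  "block_perm_group \<cong> product_group I (\<lambda>i. sym_group (card (S i)))"
proof -
  have "block_perm_group \<cong> block_product_group"
    by (rule is_isoI[OF restrict_blocks_iso])
  also have "\<dots> \<cong> product_group I (\<lambda>i. sym_group (card (S i)))"
    by (intro iso_product_groupI perm_group_iso_sym_group finite_block group_perm_group sym_group_is_group)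
  finally show ?thesis .
qed

lemma order_block_perm_group: "order block_perm_group = (\<Prod>i\<in>I. fact (card (S i)))"
  using iso_same_card[OF block_perm_group_iso_sym_groups]
  by (simp add: order_def card_PiE finite_index sym_group_card_carrier)

lemma transversal_complement_in_join_facets:
  "c \<in> Pi I S \<Longrightarrow> join_vertices - c ` I \<in> join_facets"
  unfolding join_facets_def by blast

lemma join_faces_eq_subfacets: "join_faces = {T. T \<noteq> {} \<and> (\<exists>F\<in>join_facets. T \<subseteq> F)}"
proof (intro equalityI subsetI)
  fix T assume "T \<in> join_faces"
  then have T: "T \<noteq> {}" "T \<subseteq> join_vertices" and "\<forall>i\<in>I. \<exists>x. x \<in> S i - T"
    by (auto simp: join_faces_def)
  then obtain c where c: "\<forall>i\<in>I. c i \<in> S i - T"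
    by metis
  then have "join_vertices - c ` I \<in> join_facets"
    by (intro transversal_complement_in_join_facets) blast
  moreover have "T \<subseteq> join_vertices - c ` I"
    using T(2) c by blast
  ultimately show "T \<in> {T. T \<noteq> {} \<and> (\<exists>F\<in>join_facets. T \<subseteq> F)}"
    using T(1) by blast
next
  fix T assume "T \<in> {T. T \<noteq> {} \<and> (\<exists>F\<in>join_facets. T \<subseteq> F)}"
  then obtain c where T: "T \<noteq> {}" "T \<subseteq> join_vertices - c ` I" and c: "c \<in> Pi I S"
    unfolding join_facets_def by blast
  have "\<not> S i \<subseteq> T" if "i \<in> I" for i
    using that c T(2) by blast
  then show "T \<in> join_faces"
    using T by (auto simp: join_faces_def)
qed

lemma join_facetI:
  assumes F: "F \<subseteq> join_vertices" and missing: "\<And>i. i \<in> I \<Longrightarrow> \<exists>x. S i - F = {x}"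
  shows "F \<in> join_facets"
proof -
  obtain c where c: "\<And>i. i \<in> I \<Longrightarrow> S i - F = {c i}"
    using missing by metis
  have "F = join_vertices - c ` I"
  proof
    show "F \<subseteq> join_vertices - c ` I"
      using F c by fastforce
    show "join_vertices - c ` I \<subseteq> F"
    proof
      fix x assume x: "x \<in> join_vertices - c ` I"
      then obtain i where "i \<in> I" "x \<in> S i"
        by (blast elim: join_verticesE)
      then show "x \<in> F"
        using c x by blast
    qed
  qed
  moreover have "c \<in> Pi I S"
    using c by blast
  ultimately show ?thesis
    using transversal_complement_in_join_facets by simp
qed

lemma block_perms_transitive_on_facets:
  assumes "F \<in> join_facets" and "G \<in> join_facets"
  shows "\<exists>\<sigma>\<in>block_perms. \<sigma> ` F = G"
proof -
  obtain c d where c: "c \<in> Pi I S" "F = join_vertices - c ` I"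
    and d: "d \<in> Pi I S" "G = join_vertices - d ` I"
    using assms by (auto simp: join_facets_def)
  obtain \<sigma> where \<sigma>: "\<sigma> \<in> block_perms"
    and on_block: "\<And>i x. i \<in> I \<Longrightarrow> x \<in> S i \<Longrightarrow> \<sigma> x = transpose (c i) (d i) x"
    using block_perm_extending[of "\<lambda>i. transpose (c i) (d i)"] c(1) d(1)
    by (metis Pi_mem permutes_swap_id)
  have perm: "\<sigma> permutes join_vertices"
    using \<sigma> by (simp add: block_perms_def)
  have "\<sigma> (c i) = d i" if "i \<in> I" for i
    using c(1) that on_block by (simp add: Pi_iff)
  then have "\<sigma> ` c ` I = d ` I"
    by (simp add: image_image cong: image_cong)
  then have "\<sigma> ` F = G"
    using c(2) d(2) by (simp add: image_set_diff[OF permutes_inj[OF perm]] permutes_image[OF perm])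
  then show ?thesis
    using \<sigma> by blast
qed

lemma join_faces_subset_Pow: "join_faces \<subseteq> Pow join_vertices"
  by (auto simp: join_faces_def)

lemma automorphism_maps_block_to_block:
  assumes \<sigma>: "\<sigma> \<in> join_automorphisms" and i: "i \<in> I"
  obtains j where "j \<in> I" and "\<sigma> ` S i = S j"
proof -
  have perm: "\<sigma> permutes join_vertices"
    using \<sigma> by (simp add: join_automorphisms_def)
  have faces: "\<sigma> ` T \<in> join_faces \<longleftrightarrow> T \<in> join_faces" if "T \<subseteq> join_vertices" for T
    using \<sigma> that permutes_image_family_eq_iff[OF perm join_faces_subset_Pow]
    by (simp add: join_automorphisms_def)
  have image_subset: "\<sigma> ` T \<subseteq> join_vertices" if "T \<subseteq> join_vertices" for T
    using image_mono[OF that, of \<sigma>] permutes_image[OF perm] by simp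
  have contains_block: "\<exists>k\<in>I. S k \<subseteq> T"
    if "T \<noteq> {}" "T \<subseteq> join_vertices" "T \<notin> join_faces" for T
    using that by (auto simp: join_faces_def)
  \<comment> \<open>S i is a minimal non-face: \<sigma> ` S i contains some S j, and the part of S i mapped
    into S j is again a non-face, so it is all of S i\<close>
  have "S i \<notin> join_faces"
    using i by (auto simp: join_faces_def)
  then have "\<exists>j\<in>I. S j \<subseteq> \<sigma> ` S i"
    using faces[OF block_subset_vertices[OF i]] block_nonempty[OF i]
    by (intro contains_block image_subset block_subset_vertices i) simp_all
  then obtain j where j: "j \<in> I" "S j \<subseteq> \<sigma> ` S i"
    by blast
  define U where "U = S i \<inter> \<sigma> -` S j"
  have U: "U \<subseteq> join_vertices"
    using block_subset_vertices[OF i] by (auto simp: U_def)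
  have "\<sigma> ` U = S j"
    using j(2) by (auto simp: U_def)
  then have "U \<notin> join_faces" "U \<noteq> {}"
    using faces[OF U] j(1) block_nonempty[OF j(1)] by (auto simp: join_faces_def)
  then obtain k where k: "k \<in> I" "S k \<subseteq> U"
    using contains_block U by blast
  have "k = i"
  proof -
    obtain x where "x \<in> S k"
      using block_nonempty[OF k(1)] by blast
    then show ?thesis
      using block_unique[OF k(1) i] k(2) by (auto simp: U_def)
  qed
  then have "\<sigma> ` S i \<subseteq> S j"
    using k(2) by (auto simp: U_def)
  with j that show ?thesis
    by blast
qed

lemma join_automorphismsI:
  assumes perm: "\<sigma> permutes join_vertices" and blocks: "image \<sigma> ` S ` I = S ` I"
  shows "\<sigma> \<in> join_automorphisms"
proof -
  have "\<sigma> ` T \<in> join_faces \<longleftrightarrow> T \<in> join_faces" if T: "T \<subseteq> join_vertices" for T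
  proof -
    have "(\<exists>i\<in>I. S i \<subseteq> \<sigma> ` T) \<longleftrightarrow> (\<exists>B\<in>image \<sigma> ` S ` I. B \<subseteq> \<sigma> ` T)"
      unfolding blocks by blast
    also have "\<dots> \<longleftrightarrow> (\<exists>i\<in>I. S i \<subseteq> T)"
      using inj_image_subset_iff[OF permutes_inj[OF perm]] by simp
    finally have "(\<exists>i\<in>I. S i \<subseteq> \<sigma> ` T) \<longleftrightarrow> (\<exists>i\<in>I. S i \<subseteq> T)" .
    moreover have "\<sigma> ` T \<subseteq> join_vertices"
      using image_mono[OF T, of \<sigma>] permutes_image[OF perm] by simp
    ultimately show ?thesis
      using T by (auto simp: join_faces_def)
  qed
  then show ?thesis
    using perm permutes_image_family_eq_iff[OF perm join_faces_subset_Pow]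
    by (simp add: join_automorphisms_def)
qed

lemma block_swap_permutation:
  assumes i: "i \<in> I" and j: "j \<in> I" and "i \<noteq> j" and card: "card (S i) = card (S j)"
  obtains \<sigma> where "\<sigma> permutes join_vertices" and "\<And>k. k \<in> I \<Longrightarrow> \<sigma> ` S k = S (transpose i j k)"
proof -
  obtain f where f: "bij_betw f (S i) (S j)"
    using finite_same_card_bij[OF finite_block[OF i] finite_block[OF j] card] by blast
  define g where "g = inv_into (S i) f"
  have g: "bij_betw g (S j) (S i)"
    unfolding g_def using f by (rule bij_betw_inv_into)
  have disjoint: "S k \<inter> S l = {}" if "k \<in> I" "l \<in> I" "k \<noteq> l" for k l
    using disjoint_family_onD[OF disjoint_blocks that] .
  define \<sigma> where "\<sigma> x = (if x \<in> S i then f x else if x \<in> S j then g x else x)" for x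
  have image_block: "\<sigma> ` S k = S (transpose i j k)" if k: "k \<in> I" for k
  proof -
    have "\<sigma> ` S i = f ` S i" "\<sigma> ` S j = g ` S j"
      using disjoint[OF i j \<open>i \<noteq> j\<close>] by (auto simp: \<sigma>_def)
    moreover have "\<sigma> ` S k = S k" if "k \<noteq> i" "k \<noteq> j"
      using that disjoint[OF k i] disjoint[OF k j] by (force simp: \<sigma>_def)
    ultimately show ?thesis
      using f g by (auto simp: bij_betw_def transpose_def)
  qed
  have "\<sigma> (\<sigma> x) = x" for x
    using bij_betwE[OF f] bij_betwE[OF g] bij_betw_inv_into_left[OF f] bij_betw_inv_into_right[OF f]
      disjoint[OF i j \<open>i \<noteq> j\<close>]
    by (auto simp: \<sigma>_def g_def)
  then have "inj_on \<sigma> join_vertices"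
    by (metis inj_onI)
  moreover have "\<sigma> ` join_vertices = join_vertices"
  proof -
    have "\<sigma> ` join_vertices = (\<Union>k\<in>transpose i j ` I. S k)"
      by (simp add: join_vertices_def image_UN image_block)
    also have "transpose i j ` I = I"
      using i j by (simp add: transpose_image_eq)
    finally show ?thesis
      by (simp add: join_vertices_def)
  qed
  moreover have "\<sigma> x = x" if "x \<notin> join_vertices" for x
    using that block_subset_vertices[OF i] block_subset_vertices[OF j] by (auto simp: \<sigma>_def)
  ultimately have "\<sigma> permutes join_vertices"
    by (intro bij_imp_permutes) (simp_all add: bij_betw_def)
  with image_block that show ?thesis
    by blast
qed

lemma block_swap_automorphism:
  assumes i: "i \<in> I" and j: "j \<in> I" and "i \<noteq> j" and card: "card (S i) = card (S j)"
  obtains \<sigma> where "\<sigma> \<in> join_automorphisms" and "\<sigma> \<notin> block_perms"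
proof -
  obtain \<sigma> where perm: "\<sigma> permutes join_vertices"
    and image_block: "\<And>k. k \<in> I \<Longrightarrow> \<sigma> ` S k = S (transpose i j k)"
    using block_swap_permutation[OF i j \<open>i \<noteq> j\<close> card] by blast
  have "image \<sigma> ` S ` I = S ` transpose i j ` I"
    by (simp add: image_image image_block cong: image_cong)
  also have "transpose i j ` I = I"
    using i j by (simp add: transpose_image_eq)
  finally have "\<sigma> \<in> join_automorphisms"
    by (rule join_automorphismsI[OF perm])
  moreover have "\<sigma> \<notin> block_perms"
    using image_block[OF i] block_eq_iff[OF j i] \<open>i \<noteq> j\<close> i by (auto simp: block_perms_def)
  ultimately show ?thesis
    using that by blast
qed

lemma block_perms_subset_automorphisms: "block_perms \<subseteq> join_automorphisms"
proof
  fix \<sigma> assume "\<sigma> \<in> block_perms"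
  then have perm: "\<sigma> permutes join_vertices" and blocks: "\<forall>i\<in>I. \<sigma> ` S i = S i"
    by (simp_all add: block_perms_def)
  have "image \<sigma> ` S ` I = S ` I"
    using blocks unfolding image_image by (simp cong: image_cong)
  with perm show "\<sigma> \<in> join_automorphisms"
    by (rule join_automorphismsI)
qed

lemma automorphisms_subset_block_perms:
  assumes inj: "inj_on (\<lambda>i. card (S i)) I"
  shows "join_automorphisms \<subseteq> block_perms"
proof
  fix \<sigma> assume \<sigma>: "\<sigma> \<in> join_automorphisms"
  then have perm: "\<sigma> permutes join_vertices"
    by (simp add: join_automorphisms_def)
  have "\<sigma> ` S i = S i" if i: "i \<in> I" for i
  proof -
    obtain j where j: "j \<in> I" "\<sigma> ` S i = S j"
      using automorphism_maps_block_to_block[OF \<sigma> i] .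
    have "card (S j) = card (S i)"
      unfolding j(2)[symmetric] by (rule card_image[OF inj_on_subset[OF permutes_inj[OF perm]]]) simp
    then have "j = i"
      using inj i j(1) by (auto dest: inj_onD)
    with j show ?thesis
      by simp
  qed
  then show "\<sigma> \<in> block_perms"
    using perm by (simp add: block_perms_def)
qed

lemma block_perms_eq_automorphisms_iff:
  "block_perms = join_automorphisms \<longleftrightarrow> inj_on (\<lambda>i. card (S i)) I"
proof
  assume eq: "block_perms = join_automorphisms"
  show "inj_on (\<lambda>i. card (S i)) I"
  proof (rule inj_onI, rule ccontr)
    fix i j assume i: "i \<in> I" and j: "j \<in> I" and card: "card (S i) = card (S j)" and "i \<noteq> j"
    obtain \<sigma> where "\<sigma> \<in> join_automorphisms" "\<sigma> \<notin> block_perms"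
      by (rule block_swap_automorphism[OF i j \<open>i \<noteq> j\<close> card])
    with eq show False
      by blast
  qed
next
  assume "inj_on (\<lambda>i. card (S i)) I"
  then show "block_perms = join_automorphisms"
    using block_perms_subset_automorphisms automorphisms_subset_block_perms by blast
qed

end

definition augmented_block :: "nat set \<Rightarrow> (nat + nat set) set" where
  "augmented_block B = insert (Inr B) (Inl ` B)"

lemma card_augmented_block: "finite B \<Longrightarrow> card (augmented_block B) = 1 + card B"
  by (simp add: augmented_block_def card_image image_iff)

locale partition_complex =
  fixes n :: nat and P :: "nat set set"
  assumes partition: "partition_on {1..n+1} P"
begin

lemma part_subset: "B \<in> P \<Longrightarrow> B \<subseteq> {1..n+1}"
  using partition_onD1[OF partition] by blast

lemma finite_part: "B \<in> P \<Longrightarrow> finite B"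
  using part_subset finite_subset by blast

lemma blk_eq: "B \<in> P \<Longrightarrow> i \<in> B \<Longrightarrow> blk P i = B"
  unfolding blk_def using disjointD[OF partition_onD2[OF partition]] by (intro the_equality) auto

lemma blk_mem:
  assumes "i \<in> {1..n+1}"
  shows "blk P i \<in> P" and "i \<in> blk P i"
proof -
  obtain B where "B \<in> P" "i \<in> B"
    using assms partition_onD1[OF partition] by blast
  then show "blk P i \<in> P" "i \<in> blk P i"
    using blk_eq by simp_all
qed

sublocale boundary_join P augmented_block
proof
  show "finite P"
    using partition_onD1[OF partition] finite_UnionD by (metis finite_atLeastAtMost)
  show "disjoint_family_on augmented_block P"
    using disjointD[OF partition_onD2[OF partition]]
    by (auto simp: disjoint_family_on_def augmented_block_def)
qed (auto simp: augmented_block_def finite_part)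

lemma vertices_eq: "vertices n P = join_vertices"
  using partition_onD1[OF partition] by (auto simp: vertices_def join_vertices_def augmented_block_def)

lemma facet_vertex_in_block:
  assumes "\<forall>i\<in>{1..n+1}. y i = Inl i \<or> y i = Inr (blk P i)" and "i \<in> {1..n+1}"
  shows "y i \<in> augmented_block (blk P i)"
  using assms blk_mem(2)[OF assms(2)] by (auto simp: augmented_block_def)

lemma augmented_block_inter_facet:
  assumes y: "\<forall>i\<in>{1..n+1}. y i = Inl i \<or> y i = Inr (blk P i)" and B: "B \<in> P"
  shows "augmented_block B \<inter> y ` {1..n+1} = y ` B"
proof
  show "augmented_block B \<inter> y ` {1..n+1} \<subseteq> y ` B"
  proof
    fix z assume z: "z \<in> augmented_block B \<inter> y ` {1..n+1}"
    then obtain i where i: "i \<in> {1..n+1}" "z = y i"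
      by blast
    then have "blk P i = B"
      using block_unique[OF blk_mem(1)[OF i(1)] B] facet_vertex_in_block[OF y] z by blast
    then show "z \<in> y ` B"
      using i blk_mem(2) by blast
  qed
  show "y ` B \<subseteq> augmented_block B \<inter> y ` {1..n+1}"
  proof
    fix z assume "z \<in> y ` B"
    then obtain i where i: "i \<in> B" "z = y i"
      by blast
    then have i1: "i \<in> {1..n+1}"
      using part_subset[OF B] by blast
    then have "y i \<in> augmented_block B"
      using facet_vertex_in_block[OF y] blk_eq[OF B i(1)] by metis
    then show "z \<in> augmented_block B \<inter> y ` {1..n+1}"
      using i1 i(2) by blast
  qed
qed

lemma facet_in_join_facets:
  assumes inj: "inj_on y {1..n+1}" and y: "\<forall>i\<in>{1..n+1}. y i = Inl i \<or> y i = Inr (blk P i)"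
  shows "y ` {1..n+1} \<in> join_facets"
proof (rule join_facetI)
  show "y ` {1..n+1} \<subseteq> join_vertices"
    using facet_vertex_in_block[OF y] blk_mem(1) block_subset_vertices by blast
  fix B assume B: "B \<in> P"
  have "card (augmented_block B - y ` {1..n+1})
      = card (augmented_block B) - card (augmented_block B \<inter> y ` {1..n+1})"
    using finite_block[OF B] by (intro card_Diff_subset_Int) simp
  also have "\<dots> = 1"
    using augmented_block_inter_facet[OF y B] card_image[OF inj_on_subset[OF inj part_subset[OF B]]]
      card_augmented_block[OF finite_part[OF B]]
    by simp
  finally show "\<exists>x. augmented_block B - y ` {1..n+1} = {x}"
    by (rule card_1_singletonE) blast
qed

definition facet_map :: "(nat set \<Rightarrow> nat + nat set) \<Rightarrow> nat \<Rightarrow> nat + nat set" where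
  "facet_map c i = (if c (blk P i) = Inl i then Inr (blk P i) else Inl i)"

lemma inj_on_facet_map: "inj_on (facet_map c) {1..n+1}"
  by (rule inj_onI) (auto simp: facet_map_def split: if_splits)

lemma facet_map_image_subset:
  assumes c: "c \<in> Pi P augmented_block"
  shows "facet_map c ` {1..n+1} \<subseteq> join_vertices - c ` P"
proof
  fix z assume "z \<in> facet_map c ` {1..n+1}"
  then obtain i where i: "i \<in> {1..n+1}" "z = facet_map c i"
    by blast
  have B: "blk P i \<in> P" "i \<in> blk P i"
    using blk_mem[OF i(1)] .
  then have z_in: "z \<in> augmented_block (blk P i)"
    using i(2) by (auto simp: facet_map_def augmented_block_def)
  have "z \<noteq> c C" if "C \<in> P" for C
  proof
    assume "z = c C"
    then have "C = blk P i"
      using block_unique[OF that B(1)] c z_in that by blast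
    then show False
      using \<open>z = c C\<close> i(2) by (auto simp: facet_map_def split: if_splits)
  qed
  then show "z \<in> join_vertices - c ` P"
    using z_in B(1) block_subset_vertices by blast
qed

lemma transversal_complement_subset_facet_map_image:
  assumes c: "c \<in> Pi P augmented_block"
  shows "join_vertices - c ` P \<subseteq> facet_map c ` {1..n+1}"
proof
  fix z assume z: "z \<in> join_vertices - c ` P"
  then obtain B where B: "B \<in> P" "z \<in> augmented_block B"
    by (blast elim: join_verticesE)
  have "c B \<in> augmented_block B" "c B \<noteq> z"
    using c B z by auto
  then obtain i where "i \<in> B" and "facet_map c i = z"
    using B(2) blk_eq[OF B(1)] by (auto simp: augmented_block_def facet_map_def)
  moreover have "i \<in> {1..n+1}"
    using part_subset[OF B(1)] \<open>i \<in> B\<close> by blast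
  ultimately show "z \<in> facet_map c ` {1..n+1}"
    by (metis image_eqI)
qed

lemma transversal_complement_in_facets:
  assumes "c \<in> Pi P augmented_block"
  shows "join_vertices - c ` P \<in> facets n P"
proof -
  have "facet_map c ` {1..n+1} = join_vertices - c ` P"
    using facet_map_image_subset[OF assms] transversal_complement_subset_facet_map_image[OF assms]
    by (rule equalityI)
  moreover have "\<forall>i\<in>{1..n+1}. facet_map c i = Inl i \<or> facet_map c i = Inr (blk P i)"
    by (simp add: facet_map_def)
  ultimately show ?thesis
    using inj_on_facet_map unfolding facets_def by blast
qed

lemma facets_eq: "facets n P = join_facets"
proof
  show "facets n P \<subseteq> join_facets"
    using facet_in_join_facets by (auto simp: facets_def)
  show "join_facets \<subseteq> facets n P"
    using transversal_complement_in_facets by (auto simp: join_facets_def)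
qed

lemma faces_eq: "faces n P = join_faces"
  by (simp add: faces_def join_faces_eq_subfacets facets_eq)

lemma Aut_eq: "Aut n P = join_automorphisms"
  by (simp add: Aut_def join_automorphisms_def faces_eq vertices_eq)

lemma reflections_eq_stars:
  "refl_gen P ` {1..n+1} = {transpose (Inr B) x | B x. B \<in> P \<and> x \<in> augmented_block B - {Inr B}}"
proof (intro equalityI subsetI)
  fix t assume "t \<in> refl_gen P ` {1..n+1}"
  then obtain i where i: "i \<in> {1..n+1}" and t: "t = transpose (Inr (blk P i)) (Inl i)"
    by (auto simp: refl_gen_def transpose_commute)
  have "Inl i \<in> augmented_block (blk P i) - {Inr (blk P i)}"
    using blk_mem(2)[OF i] by (simp add: augmented_block_def)
  then show "t \<in> {transpose (Inr B) x | B x. B \<in> P \<and> x \<in> augmented_block B - {Inr B}}"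
    using blk_mem(1)[OF i] t by blast
next
  fix t assume "t \<in> {transpose (Inr B) x | B x. B \<in> P \<and> x \<in> augmented_block B - {Inr B}}"
  then obtain B i where B: "B \<in> P" "i \<in> B" and t: "t = transpose (Inr B) (Inl i)"
    by (auto simp: augmented_block_def)
  then have "t = refl_gen P i"
    by (simp add: refl_gen_def blk_eq transpose_commute)
  then show "t \<in> refl_gen P ` {1..n+1}"
    using part_subset B by blast
qed

lemma Cox_eq: "Cox n P = block_perms"
  unfolding Cox_def vertices_eq reflections_eq_stars
  by (rule block_perms_eq_generate_stars[symmetric]) (simp add: augmented_block_def)

lemma Cox_group_eq: "Cox_group n P = block_perm_group"
  by (simp add: Cox_group_def block_perm_group_def Cox_eq vertices_eq)

end

theorem proposition2p8:
  fixes n :: nat and P :: "nat set set"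
  assumes "n \<ge> 2" and "partition_on {1..n+1} P"
  shows "Cox_group n P \<cong> product_group P (\<lambda>B. sym_group (1 + card B))
      \<and> order (Cox_group n P) = (\<Prod>B\<in>P. fact (card B + 1))
      \<and> (Cox n P = Aut n P \<longleftrightarrow> inj_on card P)
      \<and> (\<forall>F\<in>facets n P. \<forall>G\<in>facets n P. \<exists>\<sigma>\<in>Cox n P. \<sigma> ` F = G)"
proof -
  interpret partition_complex n P
    by standard (rule assms(2))
  have card_block: "card (augmented_block B) = 1 + card B" if "B \<in> P" for B
    using card_augmented_block[OF finite_part[OF that]] .
  have "product_group P (\<lambda>B. sym_group (card (augmented_block B)))
      = product_group P (\<lambda>B. sym_group (1 + card B))"
    using card_block by (simp add: product_group_def cong: PiE_cong restrict_cong)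
  then have iso: "Cox_group n P \<cong> product_group P (\<lambda>B. sym_group (1 + card B))"
    using block_perm_group_iso_sym_groups by (simp add: Cox_group_eq)
  have order: "order (Cox_group n P) = (\<Prod>B\<in>P. fact (card B + 1))"
    unfolding Cox_group_eq order_block_perm_group by (rule prod.cong) (simp_all add: card_block)
  have "inj_on (\<lambda>B. card (augmented_block B)) P \<longleftrightarrow> inj_on card P"
    using card_block by (simp add: inj_on_def)
  then have aut: "Cox n P = Aut n P \<longleftrightarrow> inj_on card P"
    using block_perms_eq_automorphisms_iff by (simp add: Cox_eq Aut_eq)
  have "\<forall>F\<in>facets n P. \<forall>G\<in>facets n P. \<exists>\<sigma>\<in>Cox n P. \<sigma> ` F = G"
    using block_perms_transitive_on_facets by (simp add: facets_eq Cox_eq)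
  with iso order aut show ?thesis
    by blast
qed

end
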